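(* Let $r>0$ be real. For every integer $N\ge1$, $$g_r=\frac{m}{(m+1)^{r+1}}\left\{\sum_{k=0}^{N-1}(-1)^k\frac{\tilde\mu_k}{(m+1)^k}\binom{r+k}{r}+O\!\left(m^{-\lceil N/2\rceil}\right)\right\}\quad\text{as } m\to\infty.$$
   Context: For $m>0$, $g_r=\sum_{s=1}^\infty e^{-m}\frac{m^s}{s!}\,s^{-r}$ (the $r$-th inverse moment of the positive Poisson distribution times $1-e^{-m}$), and $\tilde\mu_k=\sum_{s=0}^\infty e^{-m}\frac{m^s}{s!}(s-m)^k$ is the $k$-th central moment of the Poisson distribution with mean $m$. For non-integer $r$, $\binom{r+k}{r}:=(r+1)(r+2)\cdots(r+k)/k!$ (and $=1$ for $k=0$). $\lceil x\rceil$ is the ceiling of $x$. *)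

theory Defs
  imports "HOL-Analysis.Analysis" "HOL-Library.Landau_Symbols"
begin

definition poisson_w :: "real \<Rightarrow> nat \<Rightarrow> real" where
  "poisson_w m s = exp (- m) * m ^ s / fact s"

definition g_inv :: "real \<Rightarrow> real \<Rightarrow> real" where
  "g_inv r m = (\<Sum>s. poisson_w m (Suc s) * real (Suc s) powr (- r))"

definition mu_central :: "nat \<Rightarrow> real \<Rightarrow> real" where
  "mu_central k m = (\<Sum>s. poisson_w m s * (real s - m) ^ k)"

text \<open>binom(r+k, r) := (r+1)(r+2)...(r+k)/k!\<close>
definition binom_r :: "real \<Rightarrow> nat \<Rightarrow> real" where
  "binom_r r k = pochhammer (r + 1) k / fact k"

end

theory Submission
  imports Defs
begin

(* Put a = r + 1 and let S be Poisson with mean m. The shift identity E[S h(S)] = m E[h(S + 1)]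
   turns g_r (m+1)^(r+1) / m into E[(1 + U)^(-a)] with U = (S - m)/(m + 1), and since
   E[U^k] = mu_k / (m+1)^k the truncated sum is E of the Taylor polynomial of (1 + u)^(-a) at 0.
   The Taylor remainder of order n is O(|u|^n) for u >= -1/2; on the rest of the range
   1 + U >= 1/(m+1) it is O((m+1)^a), and that region is controlled by a high even moment of U.
   The recursion mu_(k+1) = m Sum_(i<k) C(k,i) mu_i gives mu_k = O(m^(k div 2)), hence
   E[U^k] = O(m^(-ceil(k/2))), which bounds both parts; for odd N one more term of the same
   order is added. *)

lemma poisson_w_nonneg: "m \<ge> 0 \<Longrightarrow> poisson_w m s \<ge> 0"
  by (simp add: poisson_w_def)

lemma poisson_w_Suc: "poisson_w m (Suc s) = poisson_w m s * m / real (Suc s)"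
  by (simp add: poisson_w_def field_simps)

lemma sums_poisson_w: "poisson_w m sums 1"
proof -
  have "(\<lambda>s. exp (-m) * (m ^ s / fact s)) sums (exp (-m) * exp m)"
    using exp_converges[of m] by (intro sums_mult) (simp add: scaleR_conv_of_real divide_inverse mult.commute)
  then show ?thesis by (simp add: poisson_w_def[abs_def] exp_minus field_simps)
qed

lemma power_le_fact_mult_exp:
  fixes x :: real
  assumes "x \<ge> 0"
  shows "x ^ k \<le> fact k * exp x"
proof -
  have exp_sums: "(\<lambda>n. x ^ n / fact n) sums exp x"
    using exp_converges[of x] by (simp add: scaleR_conv_of_real divide_inverse mult.commute)
  have "(\<Sum>n\<in>{k}. x ^ n / fact n) \<le> (\<Sum>n. x ^ n / fact n)"
    using exp_sums assms by (intro sum_le_suminf) (auto simp: sums_iff)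
  then show ?thesis using exp_sums by (simp add: sums_iff field_simps)
qed

lemma summable_poisson_w_power:
  assumes m: "m \<ge> 0"
  shows "summable (\<lambda>s. poisson_w m s * (real s + c - m) ^ k)"
proof (rule summable_comparison_test')
  have "summable (\<lambda>s. exp (-m) * (inverse (fact s) * (m * exp 1) ^ s))"
    by (intro summable_mult summable_exp)
  then show "summable (\<lambda>s. fact k * exp (\<bar>c\<bar> + m) * (poisson_w m s * exp 1 ^ s))"
    by (intro summable_mult) (simp add: poisson_w_def power_mult_distrib field_simps)
next
  fix s :: nat
  have "\<bar>real s + c - m\<bar> ^ k \<le> (real s + \<bar>c\<bar> + m) ^ k"
    by (rule power_mono) (use m in auto)
  also have "\<dots> \<le> fact k * exp (real s + \<bar>c\<bar> + m)"
    by (rule power_le_fact_mult_exp) (use m in auto)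
  also have "exp (real s + \<bar>c\<bar> + m) = exp (\<bar>c\<bar> + m) * exp 1 ^ s"
    by (simp add: exp_add exp_of_nat_mult[symmetric])
  finally have "poisson_w m s * \<bar>real s + c - m\<bar> ^ k \<le> poisson_w m s * (fact k * exp (\<bar>c\<bar> + m) * exp 1 ^ s)"
    using poisson_w_nonneg[OF m] by (intro mult_left_mono) (simp_all add: mult_ac)
  then show "norm (poisson_w m s * (real s + c - m) ^ k) \<le> fact k * exp (\<bar>c\<bar> + m) * (poisson_w m s * exp 1 ^ s)"
    using poisson_w_nonneg[OF m, of s] by (simp add: abs_mult power_abs mult_ac)
qed

lemma summable_poisson_w_central_power:
  "m \<ge> 0 \<Longrightarrow> summable (\<lambda>s. poisson_w m s * (real s - m) ^ k)"
  using summable_poisson_w_power[of m 0 k] by simp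

lemma poisson_w_shift:
  assumes m: "m \<ge> 0" and h: "summable (\<lambda>s. poisson_w m s * h (Suc s))"
  shows "summable (\<lambda>s. poisson_w m s * real s * h s)"
    and "(\<Sum>s. poisson_w m s * real s * h s) = m * (\<Sum>s. poisson_w m s * h (Suc s))"
proof -
  define f where "f s = poisson_w m s * real s * h s" for s
  have f_Suc: "f (Suc s) = m * (poisson_w m s * h (Suc s))" for s
    by (simp add: f_def poisson_w_Suc field_simps)
  have "(\<lambda>s. f (Suc s)) sums (m * (\<Sum>s. poisson_w m s * h (Suc s)))"
    unfolding f_Suc using h by (intro sums_mult summable_sums)
  then have "f sums (m * (\<Sum>s. poisson_w m s * h (Suc s)) + f 0)"
    by (rule sums_Suc)
  then have "f sums (m * (\<Sum>s. poisson_w m s * h (Suc s)))"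
    by (simp add: f_def)
  then show "summable (\<lambda>s. poisson_w m s * real s * h s)"
    and "(\<Sum>s. poisson_w m s * real s * h s) = m * (\<Sum>s. poisson_w m s * h (Suc s))"
    by (simp_all add: f_def[abs_def] sums_iff)
qed

lemma mu_central_0: "mu_central 0 m = 1"
  using sums_poisson_w[of m] by (simp add: mu_central_def sums_iff)

lemma mu_central_Suc:
  assumes m: "m \<ge> 0"
  shows "mu_central (Suc k) m = m * (\<Sum>i<k. real (k choose i) * mu_central i m)"
proof -
  define h where "h s = (real s - m) ^ k" for s
  have h_Suc: "summable (\<lambda>s. poisson_w m s * h (Suc s))"
    using summable_poisson_w_power[OF m, of 1 k] by (simp add: h_def add_ac)
  have h0: "summable (\<lambda>s. poisson_w m s * h s)"
    using summable_poisson_w_central_power[OF m] by (simp add: h_def)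
  have binomial: "poisson_w m s * h (Suc s) = (\<Sum>i\<le>k. real (k choose i) * (poisson_w m s * (real s - m) ^ i))" for s
  proof -
    have "h (Suc s) = ((real s - m) + 1) ^ k" by (simp add: h_def algebra_simps)
    also have "\<dots> = (\<Sum>i\<le>k. real (k choose i) * (real s - m) ^ i)"
      by (subst binomial_ring) simp
    finally show ?thesis by (simp add: sum_distrib_left mult_ac)
  qed
  have "mu_central (Suc k) m = (\<Sum>s. poisson_w m s * real s * h s - m * (poisson_w m s * h s))"
    unfolding mu_central_def by (intro suminf_cong) (simp add: h_def algebra_simps)
  also have "\<dots> = (\<Sum>s. poisson_w m s * real s * h s) - m * (\<Sum>s. poisson_w m s * h s)"
    using suminf_diff[OF poisson_w_shift(1)[OF m h_Suc] summable_mult[OF h0, of m]] suminf_mult[OF h0, of m]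
    by simp
  also have "(\<Sum>s. poisson_w m s * real s * h s) = m * (\<Sum>s. poisson_w m s * h (Suc s))"
    by (rule poisson_w_shift(2)[OF m h_Suc])
  also have "(\<Sum>s. poisson_w m s * h (Suc s)) = (\<Sum>i\<le>k. \<Sum>s. real (k choose i) * (poisson_w m s * (real s - m) ^ i))"
    unfolding binomial by (rule suminf_sum) (intro summable_mult summable_poisson_w_central_power m)
  also have "\<dots> = (\<Sum>i\<le>k. real (k choose i) * mu_central i m)"
    by (intro sum.cong refl) (simp add: mu_central_def suminf_mult[OF summable_poisson_w_central_power[OF m]])
  also have "(\<Sum>s. poisson_w m s * h s) = mu_central k m"
    by (simp add: mu_central_def h_def)
  finally show ?thesis
    by (simp add: lessThan_Suc_atMost[symmetric] algebra_simps)
qed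

lemma mu_central_bound: "\<exists>C\<ge>0. \<forall>m\<ge>1. \<bar>mu_central k m\<bar> \<le> C * m ^ (k div 2)"
proof (induction k rule: less_induct)
  case (less k)
  consider "k = 0" | "k = 1" | j where "k = Suc (Suc j)"
    by (metis One_nat_def not0_implies_Suc)
  then show ?case
  proof cases
    case 1
    then show ?thesis by (intro exI[of _ 1]) (simp add: mu_central_0)
  next
    case 2
    then show ?thesis by (intro exI[of _ 0]) (simp add: mu_central_Suc)
  next
    case (3 j)
    have "\<forall>i\<le>j. \<exists>C\<ge>0. \<forall>m\<ge>1. \<bar>mu_central i m\<bar> \<le> C * m ^ (i div 2)"
      using less 3 by simp
    then obtain Cf where Cf0: "\<And>i. i \<le> j \<Longrightarrow> Cf i \<ge> 0"
      and Cf: "\<And>i m. i \<le> j \<Longrightarrow> m \<ge> 1 \<Longrightarrow> \<bar>mu_central i m\<bar> \<le> Cf i * m ^ (i div 2)"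
      by metis
    define C where "C = (\<Sum>i\<le>j. real (Suc j choose i) * Cf i)"
    have "C \<ge> 0"
      unfolding C_def using Cf0 by (intro sum_nonneg) auto
    moreover have "\<bar>mu_central k m\<bar> \<le> C * m ^ (k div 2)" if m: "m \<ge> 1" for m
    proof -
      have "\<bar>mu_central i m\<bar> \<le> Cf i * m ^ (j div 2)" if "i \<le> j" for i
      proof -
        have "\<bar>mu_central i m\<bar> \<le> Cf i * m ^ (i div 2)"
          using Cf[OF that m] .
        also have "\<dots> \<le> Cf i * m ^ (j div 2)"
          using m that Cf0 by (intro mult_left_mono power_increasing div_le_mono) auto
        finally show ?thesis .
      qed
      then have "\<bar>\<Sum>i\<le>j. real (Suc j choose i) * mu_central i m\<bar> \<le> C * m ^ (j div 2)"
        unfolding C_def sum_distrib_right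
        by (intro order.trans[OF sum_abs] sum_mono) (auto simp: abs_mult mult_ac intro: mult_left_mono)
      then have "m * \<bar>\<Sum>i\<le>j. real (Suc j choose i) * mu_central i m\<bar> \<le> m * (C * m ^ (j div 2))"
        using m by (intro mult_left_mono) auto
      then show ?thesis
        using m by (simp add: 3 mu_central_Suc lessThan_Suc_atMost abs_mult mult_ac)
    qed
    ultimately show ?thesis by blast
  qed
qed

lemma mu_central_div_power_bound:
  "\<exists>A\<ge>0. \<forall>m\<ge>1. \<bar>mu_central k m\<bar> / (m + 1) ^ k \<le> A / m ^ ((k + 1) div 2)"
proof -
  obtain C where C0: "C \<ge> 0" and C: "\<And>m. m \<ge> 1 \<Longrightarrow> \<bar>mu_central k m\<bar> \<le> C * m ^ (k div 2)"
    using mu_central_bound[of k] by blast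
  have "\<bar>mu_central k m\<bar> / (m + 1) ^ k \<le> C / m ^ ((k + 1) div 2)" if m: "m \<ge> 1" for m
  proof -
    have "k div 2 + (k + 1) div 2 = k" by presburger
    then have "m ^ (k div 2) * m ^ ((k + 1) div 2) = m ^ k"
      by (metis power_add)
    also have "\<dots> \<le> (m + 1) ^ k"
      using m by (intro power_mono) auto
    finally have le: "m ^ (k div 2) * m ^ ((k + 1) div 2) \<le> (m + 1) ^ k" .
    have "\<bar>mu_central k m\<bar> * m ^ ((k + 1) div 2) \<le> C * (m ^ (k div 2) * m ^ ((k + 1) div 2))"
      using C[OF m] m by (simp add: mult.assoc[symmetric] mult_right_mono)
    also have "\<dots> \<le> C * (m + 1) ^ k"
      using le C0 by (rule mult_left_mono)
    finally show ?thesis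
      using m by (simp add: divide_simps mult_ac)
  qed
  then show ?thesis
    using C0 by blast
qed

definition neg_powr_remainder :: "real \<Rightarrow> nat \<Rightarrow> real \<Rightarrow> real" where
  "neg_powr_remainder a n u =
     (1 + u) powr (- a) - (\<Sum>k<n. (-1) ^ k * pochhammer a k / fact k * u ^ k)"

lemma neg_powr_remainder_local_bound:
  assumes a: "a > 0" and n: "n > 0"
  shows "\<exists>C\<ge>0. \<forall>u\<ge>-1/2. \<bar>neg_powr_remainder a n u\<bar> \<le> C * \<bar>u\<bar> ^ n"
proof -
  define diff where "diff k t = (-1) ^ k * pochhammer a k * (1 + t) powr (- a - real k)" for k t
  define C where "C = pochhammer a n * 2 powr (a + n) / fact n"
  have poch_pos: "pochhammer a k > 0" for k
    using a by (intro pochhammer_pos) auto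
  have "\<bar>neg_powr_remainder a n u\<bar> \<le> C * \<bar>u\<bar> ^ n" if u: "u \<ge> -1/2" for u
  proof (cases "u = 0")
    case True
    have "(\<Sum>k<n. (-1) ^ k * pochhammer a k / fact k * u ^ k) = (\<Sum>k<n. if k = 0 then 1 else 0)"
      using True by (intro sum.cong) auto
    then show ?thesis
      using n True by (simp add: neg_powr_remainder_def power_0_left)
  next
    case False
    have D: "\<forall>k t. k < n \<and> -1/2 \<le> t \<and> t \<le> max u 0 \<longrightarrow> DERIV (diff k) t :> diff (Suc k) t"
    proof (intro allI impI)
      fix k t assume kt: "k < n \<and> -1/2 \<le> t \<and> t \<le> max u 0"
      have "DERIV (diff k) t :> (-1) ^ k * pochhammer a k * ((- a - real k) * (1 + t) powr (- a - real k - 1))"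
        unfolding diff_def using kt by (auto intro!: derivative_eq_intros)
      then show "DERIV (diff k) t :> diff (Suc k) t"
        by (simp add: diff_def pochhammer_rec' algebra_simps)
    qed
    have "\<exists>t. (if u < 0 then u < t \<and> t < 0 else 0 < t \<and> t < u) \<and>
        (1 + u) powr (-a) = (\<Sum>k<n. diff k 0 / fact k * (u - 0) ^ k) + diff n t / fact n * (u - 0) ^ n"
      by (rule Taylor[OF n _ D]) (use u False in \<open>auto simp: diff_def\<close>)
    then obtain t where t: "if u < 0 then u < t \<and> t < 0 else 0 < t \<and> t < u"
      and taylor: "(1 + u) powr (-a) = (\<Sum>k<n. diff k 0 / fact k * u ^ k) + diff n t / fact n * u ^ n"
      by auto
    have remainder: "neg_powr_remainder a n u = diff n t / fact n * u ^ n"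
      using taylor by (simp add: neg_powr_remainder_def diff_def)
    have "(1 + t) powr (- a - real n) \<le> (1/2) powr (- a - real n)"
      using t u a by (intro powr_mono2') (auto split: if_splits)
    also have "(1/2::real) powr (- a - real n) = 1 / 2 powr (- (a + real n))"
      by (simp add: powr_divide)
    also have "\<dots> = 2 powr (a + n)"
      by (simp only: powr_minus_divide) simp
    finally have "\<bar>diff n t\<bar> \<le> pochhammer a n * 2 powr (a + n)"
      using poch_pos[of n] by (simp add: diff_def abs_mult)
    then show ?thesis
      unfolding remainder C_def by (simp add: abs_mult power_abs divide_right_mono mult_right_mono)
  qed
  moreover have "C \<ge> 0"
    using poch_pos[of n] by (simp add: C_def)
  ultimately show ?thesis by blast
qed

lemma neg_powr_remainder_far_bound:
  assumes a: "a > 0"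
  shows "\<exists>D\<ge>0. \<forall>M u. M \<ge> 1 \<longrightarrow> 1 + u \<ge> 1 / M \<longrightarrow> u \<le> 0 \<longrightarrow>
           \<bar>neg_powr_remainder a n u\<bar> \<le> D * M powr a"
proof -
  define S where "S = (\<Sum>k<n. \<bar>(-1) ^ k * pochhammer a k / fact k\<bar>)"
  have S0: "S \<ge> 0" by (simp add: S_def sum_nonneg)
  have "\<bar>neg_powr_remainder a n u\<bar> \<le> (1 + S) * M powr a"
    if M: "M \<ge> 1" and u: "1 + u \<ge> 1 / M" "u \<le> 0" for M u
  proof -
    have Ma: "M powr a \<ge> 1"
      using M a by (simp add: ge_one_powr_ge_zero)
    have "(1 + u) powr (- a) \<le> (1 / M) powr (- a)"
      using a u M by (intro powr_mono2') auto
    also have "(1 / M) powr (- a) = M powr a"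
      using M by (simp add: powr_divide powr_minus_divide)
    finally have power: "(1 + u) powr (- a) \<le> M powr a" .
    have "\<bar>u\<bar> \<le> 1"
      using u M by (smt (verit) divide_pos_pos)
    then have "\<bar>(-1) ^ k * pochhammer a k / fact k * u ^ k\<bar> \<le> \<bar>(-1) ^ k * pochhammer a k / fact k\<bar>" for k
      using power_le_one[OF abs_ge_zero, of u k] by (simp only: abs_mult power_abs mult_left_le abs_ge_zero)
    then have "\<bar>\<Sum>k<n. (-1) ^ k * pochhammer a k / fact k * u ^ k\<bar> \<le> S"
      unfolding S_def by (intro order.trans[OF sum_abs] sum_mono)
    then have "\<bar>neg_powr_remainder a n u\<bar> \<le> M powr a + S"
      using power unfolding neg_powr_remainder_def by (smt (verit) powr_ge_zero)
    also have "\<dots> \<le> (1 + S) * M powr a"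
      using mult_left_mono[OF Ma S0] by (simp add: distrib_right)
    finally show ?thesis .
  qed
  then show ?thesis
    using S0 by (intro exI[of _ "1 + S"]) auto
qed

lemma neg_powr_remainder_global_bound:
  assumes a: "a > 0" and n: "n > 0"
  shows "\<exists>C D. C \<ge> 0 \<and> D \<ge> 0 \<and> (\<forall>M u. M \<ge> 1 \<longrightarrow> 1 + u \<ge> 1 / M \<longrightarrow>
           \<bar>neg_powr_remainder a n u\<bar> \<le> C * \<bar>u\<bar> ^ n + D * M powr a * u ^ (2 * K))"
proof -
  obtain C where C0: "C \<ge> 0" and C: "\<And>u. u \<ge> -1/2 \<Longrightarrow> \<bar>neg_powr_remainder a n u\<bar> \<le> C * \<bar>u\<bar> ^ n"
    using neg_powr_remainder_local_bound[OF a n] by blast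
  obtain D where D0: "D \<ge> 0" and D: "\<And>M u. M \<ge> 1 \<Longrightarrow> 1 + u \<ge> 1 / M \<Longrightarrow> u \<le> 0 \<Longrightarrow>
      \<bar>neg_powr_remainder a n u\<bar> \<le> D * M powr a"
    using neg_powr_remainder_far_bound[OF a, of n] by blast
  have "\<bar>neg_powr_remainder a n u\<bar> \<le> C * \<bar>u\<bar> ^ n + D * 4 ^ K * M powr a * u ^ (2 * K)"
    if M: "M \<ge> 1" and u: "1 + u \<ge> 1 / M" for M u
  proof -
    have far_nonneg: "D * 4 ^ K * M powr a * u ^ (2 * K) \<ge> 0"
      using D0 by (simp add: power_mult)
    show ?thesis
    proof (cases "u \<ge> -1/2")
      case True
      then show ?thesis
        using C[OF True] far_nonneg by linarith
    next
      case False
      have "1/2 * (1/2) \<le> (-u) * (-u)"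
        using False by (intro mult_mono) auto
      then have "1 \<le> (4 * u ^ 2) ^ K"
        by (intro one_le_power) (simp add: power2_eq_square)
      then have "1 \<le> 4 ^ K * u ^ (2 * K)"
        by (simp add: power_mult power_mult_distrib)
      then have "D * M powr a * 1 \<le> D * M powr a * (4 ^ K * u ^ (2 * K))"
        using D0 by (intro mult_left_mono) auto
      also have "\<dots> = D * 4 ^ K * M powr a * u ^ (2 * K)"
        by (simp only: mult_ac)
      finally have "\<bar>neg_powr_remainder a n u\<bar> \<le> D * 4 ^ K * M powr a * u ^ (2 * K)"
        using D[OF M u] False by simp
      moreover have "C * \<bar>u\<bar> ^ n \<ge> 0"
        using C0 by simp
      ultimately show ?thesis
        by linarith
    qed
  qed
  then show ?thesis
    using C0 D0 by (intro exI[of _ C] exI[of _ "D * 4 ^ K"]) auto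
qed

definition poisson_dev :: "real \<Rightarrow> nat \<Rightarrow> real" where
  "poisson_dev m s = (real s - m) / (m + 1)"

definition expansion_error :: "real \<Rightarrow> nat \<Rightarrow> real \<Rightarrow> real" where
  "expansion_error r n m = g_inv r m * (m + 1) powr (r + 1) / m
     - (\<Sum>k<n. (-1) ^ k * mu_central k m / (m + 1) ^ k * binom_r r k)"

lemma summable_poisson_w_inverse_powr:
  assumes m: "m \<ge> 0" and a: "a \<ge> 0"
  shows "summable (\<lambda>s. poisson_w m s * real (Suc s) powr (- a))"
proof (rule summable_comparison_test')
  show "summable (poisson_w m)"
    using sums_poisson_w by (rule sums_summable)
next
  fix s :: nat
  have "real (Suc s) powr (- a) \<le> 1 powr (- a)"
    using a by (intro powr_mono2') auto
  then have "real (Suc s) powr (- a) \<le> 1"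
    by simp
  then show "norm (poisson_w m s * real (Suc s) powr (- a)) \<le> poisson_w m s"
    using poisson_w_nonneg[OF m, of s] by (simp add: abs_mult mult_left_le)
qed

lemma g_inv_scaled_sums:
  assumes m: "m > 0" and r: "r \<ge> -1"
  shows "(\<lambda>s. poisson_w m s * (1 + poisson_dev m s) powr (- (r + 1)))
           sums (g_inv r m * (m + 1) powr (r + 1) / m)"
proof -
  define a where "a = r + 1"
  define X where "X = (\<Sum>s. poisson_w m s * real (Suc s) powr (- a))"
  have X: "summable (\<lambda>s. poisson_w m s * real (Suc s) powr (- a))"
    using m r by (intro summable_poisson_w_inverse_powr) (auto simp: a_def)
  have "poisson_w m (Suc s) * real (Suc s) powr (- r) = m * (poisson_w m s * real (Suc s) powr (- a))" for s
  proof -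
    have "real (Suc s) powr (- a) = real (Suc s) powr (- r) / real (Suc s)"
      by (simp add: a_def powr_diff powr_minus_divide field_simps)
    then show ?thesis by (simp add: poisson_w_Suc)
  qed
  then have g: "g_inv r m = m * X"
    unfolding g_inv_def X_def using suminf_mult[OF X] by simp
  have dev: "poisson_w m s * (1 + poisson_dev m s) powr (- a) = poisson_w m s * real (Suc s) powr (- a) * (m + 1) powr a" for s
  proof -
    have "1 + poisson_dev m s = real (Suc s) / (m + 1)"
      using m by (simp add: poisson_dev_def field_simps)
    then show ?thesis
      using m by (simp add: powr_divide powr_minus_divide)
  qed
  have "(\<lambda>s. poisson_w m s * (1 + poisson_dev m s) powr (- a)) sums (X * (m + 1) powr a)"
    unfolding dev X_def using X by (intro sums_mult2 summable_sums)
  then show ?thesis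
    using m unfolding g a_def[symmetric] by simp
qed

lemma poisson_w_dev_power_sums:
  assumes m: "m \<ge> 0"
  shows "(\<lambda>s. poisson_w m s * poisson_dev m s ^ k) sums (mu_central k m / (m + 1) ^ k)"
proof -
  have "(\<lambda>s. poisson_w m s * (real s - m) ^ k / (m + 1) ^ k) sums (mu_central k m / (m + 1) ^ k)"
    unfolding mu_central_def using summable_poisson_w_central_power[OF m]
    by (intro sums_divide summable_sums)
  then show ?thesis
    by (simp add: poisson_dev_def power_divide)
qed

lemma truncated_sum_sums:
  assumes m: "m \<ge> 0"
  shows "(\<lambda>s. poisson_w m s * (\<Sum>k<n. (-1) ^ k * pochhammer (r + 1) k / fact k * poisson_dev m s ^ k))
           sums (\<Sum>k<n. (-1) ^ k * mu_central k m / (m + 1) ^ k * binom_r r k)"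
proof -
  have "(\<lambda>s. \<Sum>k<n. (-1) ^ k * binom_r r k * (poisson_w m s * poisson_dev m s ^ k))
      sums (\<Sum>k<n. (-1) ^ k * binom_r r k * (mu_central k m / (m + 1) ^ k))"
    using poisson_w_dev_power_sums[OF m] by (intro sums_sum sums_mult)
  then show ?thesis
    by (simp add: sum_distrib_left binom_r_def mult_ac)
qed

lemma expansion_error_sums:
  assumes m: "m > 0" and r: "r \<ge> -1"
  shows "(\<lambda>s. poisson_w m s * neg_powr_remainder (r + 1) n (poisson_dev m s)) sums expansion_error r n m"
proof -
  have "(\<lambda>s. poisson_w m s * (1 + poisson_dev m s) powr (- (r + 1)) -
      poisson_w m s * (\<Sum>k<n. (-1) ^ k * pochhammer (r + 1) k / fact k * poisson_dev m s ^ k))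
      sums expansion_error r n m"
    unfolding expansion_error_def using m r
    by (intro sums_diff g_inv_scaled_sums truncated_sum_sums) auto
  then show ?thesis
    by (simp add: neg_powr_remainder_def algebra_simps)
qed

lemma powr_div_power_le:
  fixes m a :: real
  assumes m: "m \<ge> 1" and a: "a \<ge> 0"
  shows "(m + 1) powr a / m ^ (J + nat \<lceil>a\<rceil>) \<le> 2 powr a / m ^ J"
proof -
  have "(m + 1) powr a \<le> (2 * m) powr a"
    using m a by (intro powr_mono2) auto
  also have "\<dots> = 2 powr a * m powr a"
    using m by (simp add: powr_mult)
  also have "m powr a \<le> m powr real (nat \<lceil>a\<rceil>)"
    using m real_nat_ceiling_ge by (intro powr_mono) auto
  also have "\<dots> = m ^ nat \<lceil>a\<rceil>"
    using m by (simp add: powr_realpow)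
  finally have "(m + 1) powr a \<le> 2 powr a * m ^ nat \<lceil>a\<rceil>"
    by simp
  then show ?thesis
    using m by (simp add: power_add divide_simps mult_ac)
qed

lemma abs_expansion_error_le_moments:
  assumes m: "m > 0" and r: "r \<ge> -1"
    and remainder: "\<And>u. 1 + u \<ge> 1 / (m + 1) \<Longrightarrow>
      \<bar>neg_powr_remainder (r + 1) n u\<bar> \<le> C * u ^ (2 * j) + D * u ^ (2 * k)"
  shows "\<bar>expansion_error r n m\<bar>
           \<le> C * (mu_central (2 * j) m / (m + 1) ^ (2 * j)) + D * (mu_central (2 * k) m / (m + 1) ^ (2 * k))"
proof -
  define f where "f s = poisson_w m s * neg_powr_remainder (r + 1) n (poisson_dev m s)" for s
  define g where "g s = C * (poisson_w m s * poisson_dev m s ^ (2 * j))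
      + D * (poisson_w m s * poisson_dev m s ^ (2 * k))" for s
  have f_sums: "f sums expansion_error r n m"
    unfolding f_def using expansion_error_sums[OF m r] .
  have g_sums: "g sums (C * (mu_central (2 * j) m / (m + 1) ^ (2 * j)) + D * (mu_central (2 * k) m / (m + 1) ^ (2 * k)))"
    unfolding g_def using m by (intro sums_add sums_mult poisson_w_dev_power_sums) auto
  have f_le_g: "\<bar>f s\<bar> \<le> g s" for s
  proof -
    have "1 + poisson_dev m s \<ge> 1 / (m + 1)"
      using m by (simp add: poisson_dev_def field_simps)
    then have "poisson_w m s * \<bar>neg_powr_remainder (r + 1) n (poisson_dev m s)\<bar>
        \<le> poisson_w m s * (C * poisson_dev m s ^ (2 * j) + D * poisson_dev m s ^ (2 * k))"
      using m poisson_w_nonneg[of m s] by (intro mult_left_mono remainder) auto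
    then show ?thesis
      using m poisson_w_nonneg[of m s] by (simp add: f_def g_def abs_mult algebra_simps)
  qed
  have "\<bar>suminf f\<bar> \<le> (\<Sum>s. \<bar>f s\<bar>)"
    using f_le_g sums_summable[OF g_sums] by (intro summable_rabs summable_rabs_comparison_test) auto
  also have "\<dots> \<le> suminf g"
    using f_le_g sums_summable[OF g_sums] by (intro suminf_le summable_rabs_comparison_test) auto
  finally show ?thesis
    using sums_unique[OF f_sums] sums_unique[OF g_sums] by simp
qed

lemma expansion_error_even_bound:
  assumes r: "r > -1" and J: "J \<ge> 1"
  shows "\<exists>C. \<forall>m\<ge>1. \<bar>expansion_error r (2 * J) m\<bar> \<le> C / m ^ J"
proof -
  define a where "a = r + 1"
  have a: "a > 0" using r by (simp add: a_def)
  define K where "K = J + nat \<lceil>a\<rceil>"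
  obtain C0 D0 where C0: "C0 \<ge> 0" and D0: "D0 \<ge> 0" and remainder: "\<And>M u. M \<ge> 1 \<Longrightarrow> 1 + u \<ge> 1 / M \<Longrightarrow>
      \<bar>neg_powr_remainder a (2 * J) u\<bar> \<le> C0 * \<bar>u\<bar> ^ (2 * J) + D0 * M powr a * u ^ (2 * K)"
    using neg_powr_remainder_global_bound[OF a, of "2 * J" K] J by auto
  obtain A where A: "\<And>m. m \<ge> 1 \<Longrightarrow> \<bar>mu_central (2 * J) m\<bar> / (m + 1) ^ (2 * J) \<le> A / m ^ J"
    using mu_central_div_power_bound[of "2 * J"] by auto
  obtain B where B0: "B \<ge> 0" and B: "\<And>m. m \<ge> 1 \<Longrightarrow> \<bar>mu_central (2 * K) m\<bar> / (m + 1) ^ (2 * K) \<le> B / m ^ K"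
    using mu_central_div_power_bound[of "2 * K"] by auto
  have "\<bar>expansion_error r (2 * J) m\<bar> \<le> (C0 * A + D0 * B * 2 powr a) / m ^ J" if m: "m \<ge> 1" for m
  proof -
    have "\<bar>expansion_error r (2 * J) m\<bar> \<le> C0 * (mu_central (2 * J) m / (m + 1) ^ (2 * J))
        + D0 * (m + 1) powr a * (mu_central (2 * K) m / (m + 1) ^ (2 * K))"
      using m r remainder[of "m + 1"] by (intro abs_expansion_error_le_moments) (auto simp: a_def power_even_abs)
    also have "\<dots> \<le> C0 * (A / m ^ J) + D0 * (m + 1) powr a * (B / m ^ K)"
      using order.trans[OF divide_right_mono[OF abs_ge_self] A[OF m]]
        order.trans[OF divide_right_mono[OF abs_ge_self] B[OF m]] C0 D0 m
      by (intro add_mono mult_left_mono) auto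
    also have "D0 * (m + 1) powr a * (B / m ^ K) = D0 * B * ((m + 1) powr a / m ^ K)"
      by simp
    also have "\<dots> \<le> D0 * B * (2 powr a / m ^ J)"
      unfolding K_def using m a D0 B0 by (intro mult_left_mono powr_div_power_le) auto
    finally show ?thesis
      by (simp add: add_divide_distrib)
  qed
  then show ?thesis by blast
qed

lemma expansion_error_bound:
  assumes r: "r > -1" and n: "n \<ge> 1"
  shows "\<exists>C. \<forall>m\<ge>1. \<bar>expansion_error r n m\<bar> \<le> C / m ^ ((n + 1) div 2)"
proof -
  define J where "J = (n + 1) div 2"
  have "J \<ge> 1"
    using n unfolding J_def by presburger
  then obtain C where C: "\<And>m. m \<ge> 1 \<Longrightarrow> \<bar>expansion_error r (2 * J) m\<bar> \<le> C / m ^ J"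
    using expansion_error_even_bound[OF r] by blast
  show ?thesis
  proof (cases "even n")
    case True
    then have "2 * J = n" by (auto simp: J_def)
    then show ?thesis using C by (auto simp: J_def)
  next
    case False
    then have n_Suc: "2 * J = Suc n" by (auto simp: J_def elim!: oddE)
    obtain A where A: "\<And>m. m \<ge> 1 \<Longrightarrow> \<bar>mu_central n m\<bar> / (m + 1) ^ n \<le> A / m ^ J"
      using mu_central_div_power_bound[of n] by (auto simp: J_def)
    have "\<bar>expansion_error r n m\<bar> \<le> (C + A * \<bar>binom_r r n\<bar>) / m ^ J" if m: "m \<ge> 1" for m
    proof -
      have "expansion_error r n m = expansion_error r (2 * J) m + (-1) ^ n * mu_central n m / (m + 1) ^ n * binom_r r n"
        unfolding n_Suc expansion_error_def by simp
      also have "\<bar>\<dots>\<bar> \<le> \<bar>expansion_error r (2 * J) m\<bar> + \<bar>(-1) ^ n * mu_central n m / (m + 1) ^ n * binom_r r n\<bar>"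
        by (rule abs_triangle_ineq)
      also have "\<bar>(-1) ^ n * mu_central n m / (m + 1) ^ n * binom_r r n\<bar> = \<bar>mu_central n m\<bar> / (m + 1) ^ n * \<bar>binom_r r n\<bar>"
        using m by (simp add: abs_mult power_abs)
      finally have "\<bar>expansion_error r n m\<bar> \<le> \<bar>expansion_error r (2 * J) m\<bar> + \<bar>mu_central n m\<bar> / (m + 1) ^ n * \<bar>binom_r r n\<bar>" .
      moreover have "\<bar>mu_central n m\<bar> / (m + 1) ^ n * \<bar>binom_r r n\<bar> \<le> A / m ^ J * \<bar>binom_r r n\<bar>"
        using A[OF m] by (rule mult_right_mono) simp
      ultimately show ?thesis
        using C[OF m] by (simp add: add_divide_distrib)
    qed
    then show ?thesis by (auto simp: J_def)
  qed
qed

lemma ceiling_half_eq: "real_of_int \<lceil>real n / 2\<rceil> = real ((n + 1) div 2)"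
proof (cases "even n")
  case True
  then show ?thesis by (auto elim!: evenE)
next
  case False
  then obtain q where q: "n = 2 * q + 1" by (blast elim: oddE)
  have "\<lceil>real n / 2\<rceil> = int q + 1"
    by (rule ceiling_unique) (auto simp: q)
  then show ?thesis by (simp add: q)
qed

theorem theorem2:
  fixes r :: real and N :: nat
  assumes "r > 0" and "N \<ge> 1"
  shows "(\<lambda>m. g_inv r m * (m + 1) powr (r + 1) / m
            - (\<Sum>k<N. (-1) ^ k * mu_central k m / (m + 1) ^ k * binom_r r k))
         \<in> O[at_top](\<lambda>m. m powr (- real_of_int \<lceil>real N / 2\<rceil>))"
proof -
  obtain C where C: "\<And>m. m \<ge> 1 \<Longrightarrow> \<bar>expansion_error r N m\<bar> \<le> C / m ^ ((N + 1) div 2)"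
    using expansion_error_bound[of r N] assms by auto
  have "expansion_error r N \<in> O[at_top](\<lambda>m. m powr (- real ((N + 1) div 2)))"
  proof (rule bigoI)
    show "\<forall>\<^sub>F m in at_top. norm (expansion_error r N m) \<le> C * norm (m powr (- real ((N + 1) div 2)))"
      using eventually_ge_at_top[of "1::real"]
      by eventually_elim (use C in \<open>simp add: powr_minus powr_realpow divide_inverse\<close>)
  qed
  then show ?thesis
    unfolding ceiling_half_eq expansion_error_def .
qed

end
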